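(* Let $X$ and $Y$ be cellular spaces, $X$ compact, $r\ge0$, and $a,b\colon X\to Y$ maps. If $a$ is firmly $r$-similar to $b$, then $a\overset{r}{\approx}b$.
   Context: Cellular space = based CW complex; maps based unless called unbased. $\langle W\rangle$ = free abelian group on a set $W$. $Y^X$ = based maps (compact-open); $Y^X_a$ = path component of $a$, regarded as based at $a$; $V\mapsto V|_R$ restriction; $\mathcal F_n(X)$ = finite $R\subseteq X$ containing the basepoint with $|R|\le n+1$; $\langle Y^X\rangle^{(s)}=\{V:V|_R=0\ \forall R\in\mathcal F_{s-1}(X)\}$. For unbased $U,V$: $V^{(U)}$ = unbased maps; $\Xi^U(v)$ = constant map at $v$; for $U=\coprod_iU_i$, $\boxed{\sqcup}_i\langle w_i\rangle=\langle w\rangle$, $w|_{U_i}=w_i$, multilinearly. For nonempty finite $E$: simplex $\Delta E$, faces $\Delta F$; layouts = sets $A$ of pairwise disjoint nonempty subsets; $\Delta[A]=\coprod_{F\in A}\Delta F$; $S\in\langle V^{(\Delta E)}\rangle$ fissile if $S|_{\Delta[A]}=\boxed{\sqcup}_{F\in A}S|_{\Delta F}$ for all layouts. $U\wr X=(U\times X)/(U\times\{x_0\})$, $\#^X(w)(u\wr x)=w(u)(x)$, $\langle (Y^X)^{(U)}\rangle^{(s)}_X=\langle\#^X\rangle^{-1}\langle Y^{U\wr X}\rangle^{(s)}$. $a\overset{r}{\approx}b$ iff for each nonempty finite $E$ there is a fissile $S\in\langle (Y^X_a)^{(\Delta E)}\rangle$ with $\langle\Xi^{\Delta E}(b)\rangle-S\in\langle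 (Y^X)^{(\Delta E)}\rangle^{(r+1)}_X$. Cone $\check CU=(U\times[0,1])/(U\times\{0\})$ based at the apex, $U=U\times\{1\}\subseteq\check CU$; $\check C\Delta[A]=\bigvee_{F\in A}\check C\Delta F\subseteq\check C\Delta E$. $\langle (Y^X_a)^T\rangle$: generated by based maps $T\to(Y^X_a,a)$. Combining product of based maps $\boxed{\vee}_F\langle v_F\rangle=\langle\bar\bigvee_Fv_F\rangle$. $R\in\langle (Y^X_a)^{\check C\Delta E}\rangle$ is fissile if $R|_{\check C\Delta[A]}=\boxed{\vee}_{F\in A}R|_{\check C\Delta F}$ for all layouts $A$. $a$ is firmly $r$-similar to $b$ if for every nonempty finite $E$ there is a fissile $R\in\langle (Y^X_a)^{\check C\Delta E}\rangle$ with $\langle\Xi^{\Delta E}(b)\rangle-R|_{\Delta E}\in\langle (Y^X)^{(\Delta E)}\rangle^{(r+1)}_X$ ($R|_{\Delta E}$ is restriction to the base $\Delta E\subseteq\check C\Delta E$, as unbased maps). *)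

theory Defs
  imports "HOL-Analysis.Analysis"
begin

definition disc :: "nat \<Rightarrow> (nat \<Rightarrow> real) set" where
  "disc n = {x. (\<forall>i\<ge>n. x i = 0) \<and> (\<Sum>i<n. (x i)^2) \<le> 1}"

definition disc_bd :: "nat \<Rightarrow> (nat \<Rightarrow> real) set" where
  "disc_bd n = {x. (\<forall>i\<ge>n. x i = 0) \<and> (\<Sum>i<n. (x i)^2) = 1}"

definition cellular_space :: "'a topology \<Rightarrow> 'a \<Rightarrow> bool" where
  "cellular_space X x0 \<longleftrightarrow> Hausdorff_space X \<and> x0 \<in> topspace X \<and>
    (\<exists>(cells :: 'a set set) (dim :: 'a set \<Rightarrow> nat) (\<Phi> :: 'a set \<Rightarrow> (nat \<Rightarrow> real) \<Rightarrow> 'a).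
       pairwise disjnt cells \<and> \<Union>cells = topspace X \<and> {} \<notin> cells \<and> {x0} \<in> cells \<and>
       (\<forall>e\<in>cells.
          continuous_map (subtopology (powertop_real UNIV) (disc (dim e))) X (\<Phi> e) \<and>
          homeomorphic_map (subtopology (powertop_real UNIV) (disc (dim e) - disc_bd (dim e)))
                           (subtopology X e) (\<Phi> e) \<and>
          (\<exists>C\<subseteq>cells. finite C \<and> (\<forall>e'\<in>C. dim e' < dim e) \<and> \<Phi> e ` disc_bd (dim e) \<subseteq> \<Union>C)) \<and>
       (\<forall>Z\<subseteq>topspace X. closedin X Z \<longleftrightarrow> (\<forall>e\<in>cells. closedin X (Z \<inter> \<Phi> e ` disc (dim e)))))"

definition free_ab :: "'w set \<Rightarrow> ('w \<Rightarrow> int) set" where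
  "free_ab W = {c. finite {w. c w \<noteq> 0} \<and> {w. c w \<noteq> 0} \<subseteq> W}"

definition gen :: "'w \<Rightarrow> 'w \<Rightarrow> int" where
  "gen w = (\<lambda>v. if v = w then 1 else 0)"

definition push :: "('v \<Rightarrow> 'w) \<Rightarrow> ('v \<Rightarrow> int) \<Rightarrow> 'w \<Rightarrow> int" where
  "push g c = (\<lambda>w. \<Sum>v\<in>{v. c v \<noteq> 0 \<and> g v = w}. c v)"

text \<open>Multilinear combining product: the generator on the union D whose restrictions to
  the pieces Z i (i in A) are the generators w i; P g is the based-ness requirement.\<close>
definition glue :: "'p set \<Rightarrow> (('p \<Rightarrow> 'v) \<Rightarrow> bool) \<Rightarrow> 'i set \<Rightarrow> ('i \<Rightarrow> 'p set)
                     \<Rightarrow> ('i \<Rightarrow> ('p \<Rightarrow> 'v) \<Rightarrow> int) \<Rightarrow> ('p \<Rightarrow> 'v) \<Rightarrow> int" where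
  "glue D P A Z S = (\<lambda>g. if g \<in> extensional D \<and> P g then (\<Prod>i\<in>A. S i (restrict g (Z i))) else 0)"

definition based_maps :: "'x topology \<Rightarrow> 'x \<Rightarrow> 'y topology \<Rightarrow> 'y \<Rightarrow> ('x \<Rightarrow> 'y) set" where
  "based_maps X x0 Y y0 = {f. continuous_map X Y f \<and> f x0 = y0 \<and> f \<in> extensional (topspace X)}"

definition map_space :: "'x topology \<Rightarrow> 'x \<Rightarrow> 'y topology \<Rightarrow> 'y \<Rightarrow> ('x \<Rightarrow> 'y) topology" where
  "map_space X x0 Y y0 = subtopology
     (topology_generated_by {{f. f ` K \<subseteq> U} | K U. compactin X K \<and> openin Y U})
     (based_maps X x0 Y y0)"

definition map_comp :: "'x topology \<Rightarrow> 'x \<Rightarrow> 'y topology \<Rightarrow> 'y \<Rightarrow> ('x \<Rightarrow> 'y) \<Rightarrow> ('x \<Rightarrow> 'y) topology" where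
  "map_comp X x0 Y y0 a = subtopology (map_space X x0 Y y0)
                               (path_component_of_set (map_space X x0 Y y0) a)"

definition fsimplex :: "nat set \<Rightarrow> (nat \<Rightarrow> real) set" where
  "fsimplex E = {x. (\<forall>i. 0 \<le> x i) \<and> (\<forall>i. i \<notin> E \<longrightarrow> x i = 0) \<and> sum x E = 1}"

definition simplex_top :: "nat set \<Rightarrow> (nat \<Rightarrow> real) topology" where
  "simplex_top E = subtopology (powertop_real UNIV) (fsimplex E)"

definition layout :: "nat set \<Rightarrow> nat set set \<Rightarrow> bool" where
  "layout E A \<longleftrightarrow> A \<subseteq> Pow E \<and> {} \<notin> A \<and> pairwise disjnt A"

definition unbased_maps :: "(nat \<Rightarrow> real) topology \<Rightarrow> 'v topology \<Rightarrow> ((nat \<Rightarrow> real) \<Rightarrow> 'v) set" where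
  "unbased_maps T V = {f. continuous_map T V f \<and> f \<in> extensional (topspace T)}"

definition quot_top :: "'a topology \<Rightarrow> ('a \<Rightarrow> 'b) \<Rightarrow> 'b topology" where
  "quot_top T q = topology (\<lambda>U. U \<subseteq> q ` topspace T \<and> openin T {x \<in> topspace T. q x \<in> U})"

text \<open>Cone: (U x [0,1]) / (U x {0}); apex None, (u,t) with t>0 is Some (u,t).\<close>
definition cone_pt :: "(nat \<Rightarrow> real) \<times> real \<Rightarrow> ((nat \<Rightarrow> real) \<times> real) option" where
  "cone_pt = (\<lambda>(u,t). if t = 0 then None else Some (u,t))"

definition cone_set :: "(nat \<Rightarrow> real) set \<Rightarrow> ((nat \<Rightarrow> real) \<times> real) option set" where
  "cone_set S = cone_pt ` (S \<times> {0..1})"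

definition cone_top :: "nat set \<Rightarrow> ((nat \<Rightarrow> real) \<times> real) option topology" where
  "cone_top E = quot_top (prod_topology (simplex_top E) (top_of_set {0..1})) cone_pt"

text \<open>The wedge of cones over the faces in A, as a subset of the cone on Delta E.\<close>
definition wedge_set :: "nat set set \<Rightarrow> ((nat \<Rightarrow> real) \<times> real) option set" where
  "wedge_set A = {None} \<union> (\<Union>F\<in>A. cone_set (fsimplex F))"

text \<open>U wr X modelled as None (basepoint) and Some (u,x) with x not the basepoint.\<close>
definition wr_set :: "'u set \<Rightarrow> 'x set \<Rightarrow> 'x \<Rightarrow> ('u \<times> 'x) option set" where
  "wr_set U Xs x0 = {None} \<union> Some ` (U \<times> (Xs - {x0}))"

definition sharp :: "'y \<Rightarrow> ('u \<Rightarrow> 'x \<Rightarrow> 'y) \<Rightarrow> ('u \<times> 'x) option \<Rightarrow> 'y" where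
  "sharp y0 w = (\<lambda>z. case z of None \<Rightarrow> y0 | Some (u,x) \<Rightarrow> w u x)"

text \<open>V vanishes on all R in F_(s-1)(Z), i.e. finite R with basepoint and |R| <= s.\<close>
definition filt :: "'z set \<Rightarrow> 'z \<Rightarrow> nat \<Rightarrow> (('z \<Rightarrow> 'y) \<Rightarrow> int) \<Rightarrow> bool" where
  "filt Z z0 s V \<longleftrightarrow> (\<forall>R. finite R \<and> z0 \<in> R \<and> R \<subseteq> Z \<and> card R \<le> s \<longrightarrow> push (\<lambda>f. restrict f R) V = (\<lambda>_. 0))"

definition filt_X :: "nat set \<Rightarrow> 'x topology \<Rightarrow> 'x \<Rightarrow> 'y topology \<Rightarrow> 'y \<Rightarrow> nat
                       \<Rightarrow> (((nat \<Rightarrow> real) \<Rightarrow> 'x \<Rightarrow> 'y) \<Rightarrow> int) set" where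
  "filt_X E X x0 Y y0 s = {S \<in> free_ab (unbased_maps (simplex_top E) (map_space X x0 Y y0)).
      filt (wr_set (fsimplex E) (topspace X) x0) None s (push (sharp y0) S)}"

definition fissile :: "nat set \<Rightarrow> (((nat \<Rightarrow> real) \<Rightarrow> 'v) \<Rightarrow> int) \<Rightarrow> bool" where
  "fissile E S \<longleftrightarrow> (\<forall>A. layout E A \<longrightarrow>
      push (\<lambda>f. restrict f (\<Union>F\<in>A. fsimplex F)) S =
      glue (\<Union>F\<in>A. fsimplex F) (\<lambda>_. True) A fsimplex
           (\<lambda>F. push (\<lambda>f. restrict f (fsimplex F)) S))"

definition cone_fissile :: "nat set \<Rightarrow> 'v \<Rightarrow> ((((nat \<Rightarrow> real) \<times> real) option \<Rightarrow> 'v) \<Rightarrow> int) \<Rightarrow> bool" where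
  "cone_fissile E a R \<longleftrightarrow> (\<forall>A. layout E A \<longrightarrow>
      push (\<lambda>g. restrict g (wedge_set A)) R =
      glue (wedge_set A) (\<lambda>g. g None = a) A (\<lambda>F. cone_set (fsimplex F))
           (\<lambda>F. push (\<lambda>g. restrict g (cone_set (fsimplex F))) R))"

definition r_approx :: "'x topology \<Rightarrow> 'x \<Rightarrow> 'y topology \<Rightarrow> 'y \<Rightarrow> nat \<Rightarrow> ('x \<Rightarrow> 'y) \<Rightarrow> ('x \<Rightarrow> 'y) \<Rightarrow> bool" where
  "r_approx X x0 Y y0 r a b \<longleftrightarrow>
    (\<forall>E::nat set. finite E \<and> E \<noteq> {} \<longrightarrow>
      (\<exists>S \<in> free_ab (unbased_maps (simplex_top E)
                      (map_comp X x0 Y y0 (restrict a (topspace X)))).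
         fissile E S \<and>
         (\<lambda>f. gen (restrict (\<lambda>_. restrict b (topspace X)) (fsimplex E)) f - S f) \<in> filt_X E X x0 Y y0 (r + 1)))"

definition firmly_similar :: "'x topology \<Rightarrow> 'x \<Rightarrow> 'y topology \<Rightarrow> 'y \<Rightarrow> nat \<Rightarrow> ('x \<Rightarrow> 'y) \<Rightarrow> ('x \<Rightarrow> 'y) \<Rightarrow> bool" where
  "firmly_similar X x0 Y y0 r a b \<longleftrightarrow>
    (\<forall>E::nat set. finite E \<and> E \<noteq> {} \<longrightarrow>
      (\<exists>R \<in> free_ab {g. continuous_map (cone_top E) (map_comp X x0 Y y0 (restrict a (topspace X))) g
                        \<and> g None = restrict a (topspace X) \<and> g \<in> extensional (cone_set (fsimplex E))}.
         cone_fissile E (restrict a (topspace X)) R \<and>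
         (\<lambda>f. gen (restrict (\<lambda>_. restrict b (topspace X)) (fsimplex E)) f
           - push (\<lambda>g. restrict (\<lambda>p. g (Some (p, 1))) (fsimplex E)) R f)
           \<in> filt_X E X x0 Y y0 (r + 1)))"

end

theory Submission
  imports Defs
begin

(* Restricting maps on the cone C Delta E to its base Delta E carries the witness R of firm
   similarity to a witness of r-similarity: the error term is literally the same, and fissility
   survives because restriction to the base commutes both with restriction to faces and with the
   combining product. For the latter, a combining product is the pushforward of a tensor product
   of chains along amalgamation of maps, and pushing a tensor product forward along a componentwise
   map gives the tensor product of the pushforwards. No hypothesis beyond firm similarity is used. *)

lemma push_nonzero_imp:
  assumes "push h c w \<noteq> 0"
  obtains v where "c v \<noteq> 0" "h v = w"
proof -
  have "{v. c v \<noteq> 0 \<and> h v = w} \<noteq> {}"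
    using assms unfolding push_def by force
  then show thesis using that by blast
qed

lemma finite_push_support:
  assumes "finite {v. c v \<noteq> 0}"
  shows "finite {w. push h c w \<noteq> 0}"
proof (rule finite_subset)
  show "{w. push h c w \<noteq> 0} \<subseteq> h ` {v. c v \<noteq> 0}"
    by (blast elim: push_nonzero_imp)
qed (use assms in simp)

lemma push_free_ab:
  assumes "c \<in> free_ab W" and "\<And>v. v \<in> W \<Longrightarrow> h v \<in> W'"
  shows "push h c \<in> free_ab W'"
  using assms finite_push_support unfolding free_ab_def
  by (fastforce elim: push_nonzero_imp)

lemma push_push:
  assumes fin: "finite {v. c v \<noteq> 0}"
  shows "push k (push h c) = push (k \<circ> h) c"
proof
  fix w
  define Sc where "Sc = {v. c v \<noteq> 0}"
  have push_h: "push h c u = sum c {v\<in>Sc. h v = u}" for u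
    unfolding push_def Sc_def by (rule sum.cong) auto
  have "push k (push h c) w = sum (push h c) {u. push h c u \<noteq> 0 \<and> k u = w}"
    by (simp add: push_def[of k])
  also have "\<dots> = sum (push h c) {u \<in> h ` Sc. k u = w}"
  proof (rule sum.mono_neutral_left)
    show "{u. push h c u \<noteq> 0 \<and> k u = w} \<subseteq> {u \<in> h ` Sc. k u = w}"
      by (auto simp: Sc_def elim!: push_nonzero_imp)
  qed (use fin Sc_def in auto)
  also have "\<dots> = sum (\<lambda>u. sum c {v\<in>{v\<in>Sc. k (h v) = w}. h v = u}) (h ` {v\<in>Sc. k (h v) = w})"
    by (rule sum.cong) (auto simp: push_h intro: sum.cong)
  also have "\<dots> = sum c {v\<in>Sc. k (h v) = w}"
    by (rule sum.image_gen[symmetric]) (use fin Sc_def in auto)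
  also have "\<dots> = push (k \<circ> h) c w"
    unfolding push_def Sc_def by (rule sum.cong) auto
  finally show "push k (push h c) w = push (k \<circ> h) c w" .
qed

lemma glue_cong:
  assumes "\<And>i. i \<in> A \<Longrightarrow> S i = S' i"
  shows "glue D P A Z S = glue D P A Z S'"
  unfolding glue_def using assms by (intro ext) (simp cong: prod.cong)

definition tensor :: "'i set \<Rightarrow> ('i \<Rightarrow> 'g \<Rightarrow> int) \<Rightarrow> ('i \<Rightarrow> 'g) \<Rightarrow> int" where
  "tensor A T \<phi> = (if \<phi> \<in> extensional A then \<Prod>i\<in>A. T i (\<phi> i) else 0)"

(* Meaningful when the pieces C i overlap only inside N: then the choice of i is irrelevant. *)
definition amalgam :: "'z set \<Rightarrow> 'v \<Rightarrow> 'i set \<Rightarrow> ('i \<Rightarrow> 'z set) \<Rightarrow> ('i \<Rightarrow> 'z \<Rightarrow> 'v) \<Rightarrow> 'z \<Rightarrow> 'v" where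
  "amalgam N a A C \<phi> z =
     (if z \<in> N then a else if \<exists>i\<in>A. z \<in> C i then \<phi> (SOME i. i \<in> A \<and> z \<in> C i) z else undefined)"

lemma tensor_nonzero_iff:
  "finite A \<Longrightarrow> tensor A T \<phi> \<noteq> 0 \<longleftrightarrow> \<phi> \<in> extensional A \<and> (\<forall>i\<in>A. T i (\<phi> i) \<noteq> 0)"
  by (simp add: tensor_def)

lemma finite_tensor_support:
  assumes "finite A" and "\<And>i. i \<in> A \<Longrightarrow> finite {g. T i g \<noteq> 0}"
  shows "finite {\<phi>. tensor A T \<phi> \<noteq> 0}"
proof (rule finite_subset)
  show "{\<phi>. tensor A T \<phi> \<noteq> 0} \<subseteq> PiE A (\<lambda>i. {g. T i g \<noteq> 0})"
    using assms(1) by (auto simp: tensor_nonzero_iff PiE_def Pi_def)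
qed (use assms in \<open>simp add: finite_PiE\<close>)

lemma push_tensor:
  assumes A: "finite A" and T: "\<And>i. i \<in> A \<Longrightarrow> finite {g. T i g \<noteq> 0}"
  shows "push (\<lambda>\<phi>. restrict (\<lambda>i. k i (\<phi> i)) A) (tensor A T) = tensor A (\<lambda>i. push (k i) (T i))"
proof
  fix \<psi>
  define B where "B i = {g. T i g \<noteq> 0 \<and> k i g = \<psi> i}" for i
  show "push (\<lambda>\<phi>. restrict (\<lambda>i. k i (\<phi> i)) A) (tensor A T) \<psi> = tensor A (\<lambda>i. push (k i) (T i)) \<psi>"
  proof (cases "\<psi> \<in> extensional A")
    case False
    then have "{\<phi>. tensor A T \<phi> \<noteq> 0 \<and> restrict (\<lambda>i. k i (\<phi> i)) A = \<psi>} = {}" by auto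
    then have "push (\<lambda>\<phi>. restrict (\<lambda>i. k i (\<phi> i)) A) (tensor A T) \<psi> = 0"
      by (simp only: push_def sum.empty)
    with False show ?thesis by (simp add: tensor_def)
  next
    case True
    have fiber: "{\<phi>. tensor A T \<phi> \<noteq> 0 \<and> restrict (\<lambda>i. k i (\<phi> i)) A = \<psi>} = PiE A B"
      using True A by (auto simp: tensor_nonzero_iff B_def PiE_def Pi_def extensional_def fun_eq_iff)
    have "push (\<lambda>\<phi>. restrict (\<lambda>i. k i (\<phi> i)) A) (tensor A T) \<psi> = (\<Sum>\<phi>\<in>PiE A B. \<Prod>i\<in>A. T i (\<phi> i))"
      unfolding push_def fiber by (rule sum.cong) (auto simp: tensor_def PiE_def)
    also have "\<dots> = (\<Prod>i\<in>A. \<Sum>g\<in>B i. T i g)"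
      by (rule prod_sum_PiE[symmetric]) (use A T in \<open>auto simp: B_def\<close>)
    also have "\<dots> = tensor A (\<lambda>i. push (k i) (T i)) \<psi>"
      using True by (simp add: tensor_def push_def B_def)
    finally show ?thesis .
  qed
qed

lemma amalgam_apply:
  assumes overlap: "\<And>i j. i \<in> A \<Longrightarrow> j \<in> A \<Longrightarrow> i \<noteq> j \<Longrightarrow> C i \<inter> C j \<subseteq> N"
    and "i \<in> A" "z \<in> C i" "z \<notin> N"
  shows "amalgam N a A C \<phi> z = \<phi> i z"
proof -
  have "(SOME j. j \<in> A \<and> z \<in> C j) = i"
    using assms by (intro some_equality) blast+
  then show ?thesis using assms unfolding amalgam_def by auto
qed

lemma amalgam_outside: "z \<notin> N \<union> (\<Union>i\<in>A. C i) \<Longrightarrow> amalgam N a A C \<phi> z = undefined"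
  unfolding amalgam_def by auto

lemma glue_eq_push_tensor:
  fixes a :: 'v and C :: "'i \<Rightarrow> 'z set"
  assumes overlap: "\<And>i j. i \<in> A \<Longrightarrow> j \<in> A \<Longrightarrow> i \<noteq> j \<Longrightarrow> C i \<inter> C j \<subseteq> N"
    and P: "\<And>g. P g \<longleftrightarrow> (\<forall>z\<in>N. g z = a)"
    and T: "\<And>i g. i \<in> A \<Longrightarrow> T i g \<noteq> 0 \<Longrightarrow> g \<in> extensional (C i) \<and> (\<forall>z\<in>N \<inter> C i. g z = a)"
    and A: "finite A"
  shows "glue (N \<union> (\<Union>i\<in>A. C i)) P A C T = push (amalgam N a A C) (tensor A T)"
proof
  fix g :: "'z \<Rightarrow> 'v"
  define W where "W = N \<union> (\<Union>i\<in>A. C i)"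
  define split where "split = restrict (\<lambda>i. restrict g (C i)) A"
  have amalgam_at: "amalgam N a A C \<phi> z = \<phi> i z" if "i \<in> A" "z \<in> C i" "z \<notin> N" for \<phi> i z
    by (rule amalgam_apply) (use overlap that in auto)
  have amalgam_split: "amalgam N a A C split = g" if "g \<in> extensional W" "P g"
  proof
    fix z
    consider "z \<in> N" | i where "i \<in> A" "z \<in> C i" "z \<notin> N" | "z \<notin> W"
      unfolding W_def by blast
    then show "amalgam N a A C split z = g z"
    proof cases
      case 1
      then show ?thesis using that P by (simp add: amalgam_def)
    next
      case 2
      then show ?thesis by (simp add: amalgam_at split_def)
    next
      case 3
      then show ?thesis using that amalgam_outside by (simp add: W_def extensional_def)
    qed
  qed
  have split_amalgam: "restrict (\<lambda>i. restrict (amalgam N a A C \<phi>) (C i)) A = \<phi>"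
    if "tensor A T \<phi> \<noteq> 0" for \<phi>
  proof
    fix i
    show "restrict (\<lambda>i. restrict (amalgam N a A C \<phi>) (C i)) A i = \<phi> i"
    proof (cases "i \<in> A")
      case True
      then have "\<phi> i \<in> extensional (C i)" "\<forall>z\<in>N \<inter> C i. \<phi> i z = a"
        using T that A by (auto simp: tensor_nonzero_iff)
      then show ?thesis
        using True amalgam_at by (auto simp: fun_eq_iff extensional_def amalgam_def)
    qed (use that in \<open>auto simp: tensor_def extensional_def split: if_splits\<close>)
  qed
  have amalgam_glueable: "amalgam N a A C \<phi> \<in> extensional W \<and> P (amalgam N a A C \<phi>)" for \<phi>
    using P amalgam_outside by (auto simp: W_def extensional_def amalgam_def)
  have glue_split: "glue W P A C T g = tensor A T split" if "g \<in> extensional W" "P g"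
    using that unfolding glue_def tensor_def split_def by (simp cong: prod.cong)
  have split_eq: "split = \<phi>" if "tensor A T \<phi> \<noteq> 0" "amalgam N a A C \<phi> = g" for \<phi>
    using split_amalgam[OF that(1)] that(2) unfolding split_def by simp
  show "glue W P A C T g = push (amalgam N a A C) (tensor A T) g"
  proof (cases "g \<in> extensional W \<and> P g \<and> tensor A T split \<noteq> 0")
    case True
    then have "{\<phi>. tensor A T \<phi> \<noteq> 0 \<and> amalgam N a A C \<phi> = g} = {split}"
      using amalgam_split split_eq by auto
    then show ?thesis using True by (simp add: push_def glue_split)
  next
    case False
    then have "{\<phi>. tensor A T \<phi> \<noteq> 0 \<and> amalgam N a A C \<phi> = g} = {}"
      using amalgam_glueable split_eq by blast
    moreover have "glue W P A C T g = 0"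
      using False glue_split by (auto simp: glue_def)
    ultimately show ?thesis by (simp only: push_def sum.empty)
  qed
qed

lemma push_restrict_glue:
  fixes s :: "'p \<Rightarrow> 'c" and a :: 'v
  assumes A: "finite A"
    and sC: "\<And>i p. i \<in> A \<Longrightarrow> p \<in> Z i \<Longrightarrow> s p \<in> C i"
    and sn: "\<And>p. s p \<noteq> n"
    and overlap: "\<And>i j. i \<in> A \<Longrightarrow> j \<in> A \<Longrightarrow> i \<noteq> j \<Longrightarrow> C i \<inter> C j \<subseteq> {n}"
    and T_finite: "\<And>i. i \<in> A \<Longrightarrow> finite {g. T i g \<noteq> 0}"
    and T: "\<And>i g. i \<in> A \<Longrightarrow> T i g \<noteq> 0 \<Longrightarrow> g \<in> extensional (C i) \<and> (n \<in> C i \<longrightarrow> g n = a)"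
  shows "push (\<lambda>g. restrict (\<lambda>p. g (s p)) (\<Union>i\<in>A. Z i)) (glue ({n} \<union> (\<Union>i\<in>A. C i)) (\<lambda>g. g n = a) A C T)
       = glue (\<Union>i\<in>A. Z i) (\<lambda>_. True) A Z (\<lambda>i. push (\<lambda>g. restrict (\<lambda>p. g (s p)) (Z i)) (T i))"
    (is "push ?res _ = glue _ _ _ _ (\<lambda>i. push (?k i) (T i))")
proof -
  let ?amalgam_C = "amalgam {n} a A C" and ?amalgam_Z = "amalgam {} undefined A Z"
  let ?split = "\<lambda>\<phi>. restrict (\<lambda>i. ?k i (\<phi> i)) A"
  have Z_disjoint: "Z i \<inter> Z j \<subseteq> {}" if "i \<in> A" "j \<in> A" "i \<noteq> j" for i j
    using overlap[OF that] sC that sn by blast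
  have glue_C: "glue ({n} \<union> (\<Union>i\<in>A. C i)) (\<lambda>g. g n = a) A C T = push ?amalgam_C (tensor A T)"
    by (rule glue_eq_push_tensor) (use overlap T A in auto)
  have glue_Z: "glue (\<Union>i\<in>A. Z i) (\<lambda>_. True) A Z (\<lambda>i. push (?k i) (T i))
      = push ?amalgam_Z (tensor A (\<lambda>i. push (?k i) (T i)))"
    using glue_eq_push_tensor[of A Z "{}" "\<lambda>_. True" undefined "\<lambda>i. push (?k i) (T i)"]
      Z_disjoint A by (auto elim!: push_nonzero_imp)
  have amalgam_commute: "?res \<circ> ?amalgam_C = ?amalgam_Z \<circ> ?split"
  proof (intro ext)
    fix \<phi> p
    show "(?res \<circ> ?amalgam_C) \<phi> p = (?amalgam_Z \<circ> ?split) \<phi> p"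
    proof (cases "\<exists>i\<in>A. p \<in> Z i")
      case True
      then obtain i where i: "i \<in> A" "p \<in> Z i" by blast
      have "?amalgam_C \<phi> (s p) = \<phi> i (s p)"
        by (rule amalgam_apply) (use overlap i sC sn in auto)
      moreover have "?amalgam_Z (?split \<phi>) p = ?split \<phi> i p"
        by (rule amalgam_apply) (use Z_disjoint i in auto)
      ultimately show ?thesis using i by auto
    qed (auto simp: amalgam_outside)
  qed
  have tensor_finite: "finite {\<phi>. tensor A T \<phi> \<noteq> 0}"
    using A T_finite by (rule finite_tensor_support)
  have "push ?res (push ?amalgam_C (tensor A T)) = push ?amalgam_Z (push ?split (tensor A T))"
    using amalgam_commute by (simp add: push_push tensor_finite)
  also have "push ?split (tensor A T) = tensor A (\<lambda>i. push (?k i) (T i))"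
    using A T_finite by (rule push_tensor)
  finally show ?thesis unfolding glue_C glue_Z .
qed

lemma istopology_quot_top:
  "istopology (\<lambda>U. U \<subseteq> q ` topspace T \<and> openin T {x \<in> topspace T. q x \<in> U})"
  unfolding istopology_def
proof (rule conjI; intro allI impI)
  fix S U
  assume "S \<subseteq> q ` topspace T \<and> openin T {x \<in> topspace T. q x \<in> S}"
    and "U \<subseteq> q ` topspace T \<and> openin T {x \<in> topspace T. q x \<in> U}"
  moreover have "{x \<in> topspace T. q x \<in> S \<inter> U} = {x \<in> topspace T. q x \<in> S} \<inter> {x \<in> topspace T. q x \<in> U}"
    by auto
  ultimately show "S \<inter> U \<subseteq> q ` topspace T \<and> openin T {x \<in> topspace T. q x \<in> S \<inter> U}"
    by auto
next
  fix K
  assume "\<forall>U\<in>K. U \<subseteq> q ` topspace T \<and> openin T {x \<in> topspace T. q x \<in> U}"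
  moreover have "{x \<in> topspace T. q x \<in> \<Union>K} = (\<Union>U\<in>K. {x \<in> topspace T. q x \<in> U})"
    by auto
  ultimately show "\<Union>K \<subseteq> q ` topspace T \<and> openin T {x \<in> topspace T. q x \<in> \<Union>K}"
    by auto
qed

lemma openin_quot_top:
  "openin (quot_top T q) U \<longleftrightarrow> U \<subseteq> q ` topspace T \<and> openin T {x \<in> topspace T. q x \<in> U}"
  unfolding quot_top_def topology_inverse'[OF istopology_quot_top] ..

lemma topspace_quot_top: "topspace (quot_top T q) = q ` topspace T"
proof -
  have "{x \<in> topspace T. q x \<in> q ` topspace T} = topspace T"
    by auto
  then have "openin (quot_top T q) (q ` topspace T)"
    unfolding openin_quot_top by simp
  then show ?thesis
    unfolding topspace_def openin_quot_top by blast
qed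

lemma quotient_map_quot_top: "quotient_map T (quot_top T q) q"
  unfolding quotient_map_def topspace_quot_top openin_quot_top by auto

lemma fsimplex_disjoint:
  assumes "F \<inter> F' = {}"
  shows "fsimplex F \<inter> fsimplex F' = {}"
proof -
  have "sum x F = 0" if "x \<in> fsimplex F'" for x
    using that assms by (auto simp: fsimplex_def intro!: sum.neutral)
  then show ?thesis by (auto simp: fsimplex_def)
qed

lemma fsimplex_mono:
  assumes "finite E" "F \<subseteq> E"
  shows "fsimplex F \<subseteq> fsimplex E"
proof
  fix x assume x: "x \<in> fsimplex F"
  have "sum x F = sum x E"
    by (rule sum.mono_neutral_left) (use assms x in \<open>auto simp: fsimplex_def\<close>)
  then show "x \<in> fsimplex E" using x assms unfolding fsimplex_def by auto
qed

lemma cone_pt_base: "cone_pt (p, 1) = Some (p, 1)"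
  unfolding cone_pt_def by simp

lemma base_in_cone_set: "p \<in> S \<Longrightarrow> Some (p, 1) \<in> cone_set S"
  unfolding cone_set_def by (metis cone_pt_base atLeastAtMost_iff image_eqI mem_Sigma_iff order_refl zero_le_one)

lemma cone_set_Int: "S \<inter> S' = {} \<Longrightarrow> cone_set S \<inter> cone_set S' \<subseteq> {None}"
  unfolding cone_set_def cone_pt_def by (fastforce split: if_splits)

definition cone_base :: "(nat \<Rightarrow> real) set \<Rightarrow> (((nat \<Rightarrow> real) \<times> real) option \<Rightarrow> 'v) \<Rightarrow> (nat \<Rightarrow> real) \<Rightarrow> 'v" where
  "cone_base P g = restrict (\<lambda>p. g (Some (p, 1))) P"

lemma restrict_cone_base:
  assumes "P \<subseteq> Q" and "\<And>p. p \<in> P \<Longrightarrow> Some (p, 1) \<in> K"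
  shows "(\<lambda>f. restrict f P) \<circ> cone_base Q = cone_base P \<circ> (\<lambda>g. restrict g K)"
  using assms by (auto simp: cone_base_def fun_eq_iff)

lemma cone_base_in_unbased_maps:
  assumes "continuous_map (cone_top E) M g"
  shows "cone_base (fsimplex E) g \<in> unbased_maps (simplex_top E) M"
proof -
  have base: "continuous_map (simplex_top E) (prod_topology (simplex_top E) (top_of_set {0..1::real})) (\<lambda>p. (p, 1))"
    unfolding continuous_map_pairwise o_def by auto
  have "continuous_map (simplex_top E) M (g \<circ> cone_pt \<circ> (\<lambda>p. (p, 1)))"
    using assms quotient_imp_continuous_map[OF quotient_map_quot_top] base
    unfolding cone_top_def by (metis continuous_map_compose o_assoc)
  then have "continuous_map (simplex_top E) M (cone_base (fsimplex E) g)"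
    by (rule continuous_map_eq) (simp add: simplex_top_def cone_base_def cone_pt_base)
  then show ?thesis
    by (simp add: unbased_maps_def simplex_top_def cone_base_def)
qed

lemma fissile_push_cone_base:
  fixes R :: "((((nat \<Rightarrow> real) \<times> real) option \<Rightarrow> 'v) \<Rightarrow> int)"
  assumes E: "finite E" and fissile: "cone_fissile E a R"
    and R_finite: "finite {g. R g \<noteq> 0}" and R_based: "\<And>g. R g \<noteq> 0 \<Longrightarrow> g None = a"
  shows "fissile E (push (cone_base (fsimplex E)) R)"
  unfolding fissile_def
proof (intro allI impI)
  fix A assume A: "layout E A"
  define S where "S = push (cone_base (fsimplex E)) R"
  define D where "D = (\<Union>F\<in>A. fsimplex F)"
  define C where "C F = cone_set (fsimplex F)" for F
  define T where "T F = push (\<lambda>g. restrict g (C F)) R" for F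
  have A_finite: "finite A"
    using A E unfolding layout_def by (meson finite_Pow_iff finite_subset)
  have faces: "fsimplex F \<subseteq> fsimplex E" if "F \<in> A" for F
    using A E that fsimplex_mono unfolding layout_def by blast
  have face_restrict: "push (\<lambda>f. restrict f (fsimplex F)) S = push (cone_base (fsimplex F)) (T F)"
    if "F \<in> A" for F
  proof -
    have "(\<lambda>f. restrict f (fsimplex F)) \<circ> cone_base (fsimplex E) =
        cone_base (fsimplex F) \<circ> (\<lambda>g :: _ \<Rightarrow> 'v. restrict g (C F))"
      by (rule restrict_cone_base) (use faces that in \<open>auto simp: C_def base_in_cone_set\<close>)
    then show ?thesis
      unfolding S_def T_def by (simp only: push_push[OF R_finite])
  qed
  have "(\<lambda>f. restrict f D) \<circ> cone_base (fsimplex E) =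
      cone_base D \<circ> (\<lambda>g :: _ \<Rightarrow> 'v. restrict g (wedge_set A))"
    by (rule restrict_cone_base) (use faces in \<open>auto simp: D_def wedge_set_def intro: base_in_cone_set\<close>)
  then have "push (\<lambda>f. restrict f D) S = push (cone_base D) (push (\<lambda>g. restrict g (wedge_set A)) R)"
    unfolding S_def by (simp only: push_push[OF R_finite])
  also have "\<dots> = push (cone_base D) (glue ({None} \<union> (\<Union>F\<in>A. C F)) (\<lambda>g. g None = a) A C T)"
    using fissile A unfolding cone_fissile_def wedge_set_def C_def T_def by simp
  also have "\<dots> = glue D (\<lambda>_. True) A fsimplex (\<lambda>F. push (cone_base (fsimplex F)) (T F))"
    unfolding D_def cone_base_def
  proof (rule push_restrict_glue[OF A_finite])
    show "\<And>F F'. F \<in> A \<Longrightarrow> F' \<in> A \<Longrightarrow> F \<noteq> F' \<Longrightarrow> C F \<inter> C F' \<subseteq> {None}"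
      using A unfolding layout_def pairwise_def disjnt_def C_def
      by (metis cone_set_Int fsimplex_disjoint)
    show "\<And>F. finite {g. T F g \<noteq> 0}"
      unfolding T_def using R_finite by (rule finite_push_support)
    show "\<And>F g. T F g \<noteq> 0 \<Longrightarrow> g \<in> extensional (C F) \<and> (None \<in> C F \<longrightarrow> g None = a)"
      unfolding T_def using R_based by (fastforce elim: push_nonzero_imp)
  qed (auto simp: C_def base_in_cone_set)
  also have "\<dots> = glue D (\<lambda>_. True) A fsimplex (\<lambda>F. push (\<lambda>f. restrict f (fsimplex F)) S)"
    by (rule glue_cong) (simp add: face_restrict)
  finally show "push (\<lambda>f. restrict f (\<Union>F\<in>A. fsimplex F)) (push (cone_base (fsimplex E)) R) =
      glue (\<Union>F\<in>A. fsimplex F) (\<lambda>_. True) A fsimplex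
        (\<lambda>F. push (\<lambda>f. restrict f (fsimplex F)) (push (cone_base (fsimplex E)) R))"
    unfolding S_def D_def .
qed

theorem lemma13p4:
  fixes X :: "'x topology" and Y :: "'y topology" and x0 :: 'x and y0 :: 'y
    and r :: nat and a b :: "'x \<Rightarrow> 'y"
  assumes "cellular_space X x0" and "cellular_space Y y0" and "compact_space X"
    and "continuous_map X Y a" and "a x0 = y0"
    and "continuous_map X Y b" and "b x0 = y0"
    and "firmly_similar X x0 Y y0 r a b"
  shows "r_approx X x0 Y y0 r a b"
  unfolding r_approx_def
proof (intro allI impI)
  fix E :: "nat set" assume E: "finite E \<and> E \<noteq> {}"
  let ?a = "restrict a (topspace X)"
  let ?M = "map_comp X x0 Y y0 ?a"
  let ?b = "gen (restrict (\<lambda>_. restrict b (topspace X)) (fsimplex E))"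
  obtain R
    where R: "R \<in> free_ab {g. continuous_map (cone_top E) ?M g \<and> g None = ?a \<and> g \<in> extensional (cone_set (fsimplex E))}"
      and fissile: "cone_fissile E ?a R"
      and error: "(\<lambda>f. ?b f - push (cone_base (fsimplex E)) R f) \<in> filt_X E X x0 Y y0 (r + 1)"
    using assms(8) E unfolding firmly_similar_def cone_base_def by blast
  have "push (cone_base (fsimplex E)) R \<in> free_ab (unbased_maps (simplex_top E) ?M)"
    using R by (rule push_free_ab) (simp add: cone_base_in_unbased_maps)
  moreover have "fissile E (push (cone_base (fsimplex E)) R)"
    using E fissile R by (intro fissile_push_cone_base) (auto simp: free_ab_def)
  ultimately show "\<exists>S \<in> free_ab (unbased_maps (simplex_top E) ?M).
      fissile E S \<and> (\<lambda>f. ?b f - S f) \<in> filt_X E X x0 Y y0 (r + 1)"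
    using error by blast
qed

end
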